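(* Let $f$ be a harmonic function on $K$ with $f(p_0)=\alpha$, $f(p_1)=\beta$, $f(p_2)=\gamma$, and let $g$ be its restriction to $[p_1,p_2]\cong[0,1]$. If $2\beta=\alpha+\gamma$, then the (right) derivative of $g$ at $0$ (i.e. at $p_1$) is $0$; otherwise it is infinite ($+\infty$ or $-\infty$). Similarly, if $2\gamma=\alpha+\beta$, then the (left) derivative of $g$ at $1$ (i.e. at $p_2$) is $0$; otherwise it is infinite.
   Context: Let $p_0,p_1,p_2$ be the vertices of a unit equilateral triangle in $\mathbb{R}^2$, $F_i(x)=(x+p_i)/2$, and $K$ the Sierpinski gasket (the attractor of $F_0,F_1,F_2$). Minimal triangles of the graph $G_m$ are the triangles with vertices $F_w(p_0),F_w(p_1),F_w(p_2)$ for words $w$ of length $m$. A continuous $f:K\to\mathbb{R}$ is harmonic if for every $m\ge0$ and every minimal triangle of $G_m$ with vertices $v_i,v_j,v_k$, the value at the midpoint $v_{ij}$ of $[v_i,v_j]$ is $\frac15(2f(v_i)+2f(v_j)+f(v_k))$; such $f$ is uniquely determined by its values at $p_0,p_1,p_2$. The edge $[p_1,p_2]$ is identified with $[0,1]$ via $t\mapsto p_1+t(p_2-p_1)$. *)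

theory Defs
  imports "HOL-Analysis.Analysis"
begin

text \<open>Vertices are given as a family p :: nat => complex (indices 0,1,2), points of R^2 = complex plane.\<close>

definition sg_map :: "(nat \<Rightarrow> complex) \<Rightarrow> nat \<Rightarrow> complex \<Rightarrow> complex" where
  "sg_map p i x = (x + p i) / 2"

definition sg_word :: "(nat \<Rightarrow> complex) \<Rightarrow> nat list \<Rightarrow> complex \<Rightarrow> complex" where
  "sg_word p w = foldr (\<lambda>i g. sg_map p i \<circ> g) w id"

definition unit_equilateral :: "(nat \<Rightarrow> complex) \<Rightarrow> bool" where
  "unit_equilateral p \<longleftrightarrow> dist (p 0) (p 1) = 1 \<and> dist (p 1) (p 2) = 1 \<and> dist (p 0) (p 2) = 1"

definition sg_attractor :: "(nat \<Rightarrow> complex) \<Rightarrow> complex set \<Rightarrow> bool" where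
  "sg_attractor p K \<longleftrightarrow> compact K \<and> K \<noteq> {} \<and>
     K = sg_map p 0 ` K \<union> sg_map p 1 ` K \<union> sg_map p 2 ` K"

definition sg_harmonic :: "(nat \<Rightarrow> complex) \<Rightarrow> complex set \<Rightarrow> (complex \<Rightarrow> real) \<Rightarrow> bool" where
  "sg_harmonic p K f \<longleftrightarrow> continuous_on K f \<and>
     (\<forall>w i j k. set w \<subseteq> {0,1,2} \<longrightarrow> {i,j,k} = {0,1,2::nat} \<longrightarrow>
        f ((sg_word p w (p i) + sg_word p w (p j)) / 2) =
          (2 * f (sg_word p w (p i)) + 2 * f (sg_word p w (p j)) + f (sg_word p w (p k))) / 5)"

end

theory Submission
  imports Defs
begin

text \<open>Put s = f(p0) + f(p2) - 2 f(p1) and d = f(p0) - f(p2). On the cells F_1^m(K) shrinking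
  to p1, harmonic extension multiplies the corresponding quantities for the two outer vertices
  by 3/5 and 1/5 respectively. If s = 0, the maximum principle bounds g - g(0) on [0, 2^-m] by
  a multiple of (1/5)^m, so the difference quotients are O((2/5)^m). Otherwise, as soon as
  2 |d| (1/3)^m <= |s|, the cell F_1^m F_2(K) shows that g - g(0) has the sign of s and size at
  least |s| (3/5)^m / 10 on [2^-(m+1), 2^-m], so the difference quotients grow like (6/5)^m.
  The endpoint p2 is the same statement with p1 and p2 exchanged.\<close>

lemma sg_word_Nil [simp]: "sg_word p [] = id"
  by (simp add: sg_word_def)

lemma sg_word_Cons [simp]: "sg_word p (i # w) = sg_map p i \<circ> sg_word p w"
  by (simp add: sg_word_def)

lemma sg_word_append: "sg_word p (w @ v) = sg_word p w \<circ> sg_word p v"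
  by (induction w) auto

lemma sg_word_replicate_Suc: "sg_word p (replicate (Suc m) i) = sg_word p (replicate m i) \<circ> sg_map p i"
  by (simp flip: replicate_append_same add: sg_word_append)

lemma sg_map_vertex [simp]: "sg_map p i (p i) = p i"
  by (simp add: sg_map_def)

lemma sg_word_replicate_vertex [simp]: "sg_word p (replicate m i) (p i) = p i"
  by (induction m) auto

lemma sg_word_midpoint: "sg_word p w ((x + y) / 2) = (sg_word p w x + sg_word p w y) / 2"
proof (induction w)
  case (Cons i w)
  have "sg_map p i ((a + b) / 2) = (sg_map p i a + sg_map p i b) / 2" for a b
    by (simp add: sg_map_def field_simps)
  then show ?case by (simp add: Cons.IH)
qed simp

lemma dist_sg_word: "dist (sg_word p w x) (sg_word p w y) = dist x y / 2 ^ length w"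
proof (induction w)
  case (Cons i w)
  have "dist (sg_map p i a) (sg_map p i b) = dist a b / 2" for a b
    by (simp add: sg_map_def dist_norm diff_divide_distrib [symmetric] norm_divide)
  from this [of "sg_word p w x" "sg_word p w y"] show ?case by (simp add: Cons.IH)
qed simp

lemma continuous_on_sg_word: "continuous_on S (sg_word p w)"
  by (induction w) (auto simp: sg_map_def o_def intro!: continuous_intros)

lemma sg_attractor_eq:
  "sg_attractor p K \<Longrightarrow> K = sg_map p 0 ` K \<union> sg_map p 1 ` K \<union> sg_map p 2 ` K"
  by (simp add: sg_attractor_def)

lemma sg_attractor_compact: "sg_attractor p K \<Longrightarrow> compact K"
  by (simp add: sg_attractor_def)

lemma sg_attractor_image_subset:
  assumes "sg_attractor p K" "i \<in> {0,1,2}"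
  shows "sg_map p i ` K \<subseteq> K"
proof -
  have "sg_map p i ` K \<subseteq> sg_map p 0 ` K \<union> sg_map p 1 ` K \<union> sg_map p 2 ` K"
    using assms(2) by auto
  also have "\<dots> = K"
    using sg_attractor_eq [OF assms(1)] by (rule sym)
  finally show ?thesis .
qed

lemma sg_attractor_subset_images:
  assumes "sg_attractor p K"
  shows "K \<subseteq> (\<Union>i\<in>{0,1,2}. sg_map p i ` K)"
proof -
  have "K = sg_map p 0 ` K \<union> sg_map p 1 ` K \<union> sg_map p 2 ` K"
    using assms by (rule sg_attractor_eq)
  also have "\<dots> \<subseteq> (\<Union>i\<in>{0,1,2}. sg_map p i ` K)"
    by auto
  finally show ?thesis .
qed

lemma sg_word_in_attractor:
  assumes "sg_attractor p K" "w \<in> lists {0,1,2}" "x \<in> K"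
  shows "sg_word p w x \<in> K"
  using assms(2,3)
proof (induction w)
  case (Cons i w)
  then show ?case
    using sg_attractor_image_subset [OF assms(1), of i] by auto
qed simp

lemma self_similar_word_cover:
  assumes "A \<subseteq> (\<Union>i\<in>I. sg_map p i ` A)" "x \<in> A"
  shows "\<exists>w\<in>lists I. length w = n \<and> (\<exists>y\<in>A. x = sg_word p w y)"
proof (induction n)
  case 0
  show ?case using assms(2) by (intro bexI[of _ "[]"]) auto
next
  case (Suc n)
  then obtain w y where w: "w \<in> lists I" "length w = n" and y: "y \<in> A" "x = sg_word p w y"
    by blast
  then obtain i z where "i \<in> I" "z \<in> A" "y = sg_map p i z"
    using assms(1) by blast
  with w y show ?case
    by (intro bexI[of _ "w @ [i]"]) (auto simp: sg_word_append)
qed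

lemma self_similar_subset_closure_orbit:
  assumes cover: "A \<subseteq> (\<Union>i\<in>I. sg_map p i ` A)" and "bounded A"
  shows "A \<subseteq> closure ((\<lambda>w. sg_word p w q) ` lists I)"
proof
  fix x assume "x \<in> A"
  obtain C where C: "\<And>y. y \<in> A \<Longrightarrow> dist q y \<le> C"
    using \<open>bounded A\<close> bounded_any_center by blast
  show "x \<in> closure ((\<lambda>w. sg_word p w q) ` lists I)"
    unfolding closure_approachable
  proof (intro allI impI)
    fix e :: real assume "e > 0"
    obtain n where n: "C / e < 2 ^ n"
      using real_arch_pow[of 2 "C / e"] by auto
    obtain w y where w: "w \<in> lists I" "length w = n" and y: "y \<in> A" "x = sg_word p w y"
      using self_similar_word_cover[OF cover \<open>x \<in> A\<close>] by blast
    have "dist (sg_word p w q) x = dist q y / 2 ^ n"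
      by (simp add: y(2) dist_sg_word w(2))
    also have "\<dots> < e"
      using C[OF y(1)] n \<open>e > 0\<close> by (simp add: field_simps)
    finally show "\<exists>z\<in>(\<lambda>w. sg_word p w q) ` lists I. dist z x < e"
      using w(1) by blast
  qed
qed

lemma self_similar_subset_attractor:
  assumes K: "sg_attractor p K" and "q \<in> K" "I \<subseteq> {0,1,2}"
    and cover: "A \<subseteq> (\<Union>i\<in>I. sg_map p i ` A)" and "bounded A"
  shows "A \<subseteq> K"
proof -
  have "(\<lambda>w. sg_word p w q) ` lists I \<subseteq> K"
  proof (rule image_subsetI)
    fix w assume "w \<in> lists I"
    with \<open>I \<subseteq> {0,1,2}\<close> have "w \<in> lists {0,1,2}"
      by auto
    then show "sg_word p w q \<in> K"
      by (rule sg_word_in_attractor [OF K _ \<open>q \<in> K\<close>])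
  qed
  moreover have "closed K"
    using K by (simp add: sg_attractor_compact compact_imp_closed)
  ultimately have "closure ((\<lambda>w. sg_word p w q) ` lists I) \<subseteq> K"
    by (rule closure_minimal)
  then show ?thesis
    using self_similar_subset_closure_orbit [OF cover \<open>bounded A\<close>] by (rule order_trans [rotated])
qed

definition sg_edge :: "(nat \<Rightarrow> complex) \<Rightarrow> nat \<Rightarrow> nat \<Rightarrow> real \<Rightarrow> complex" where
  "sg_edge p i j t = p i + of_real t * (p j - p i)"

lemma sg_edge_0 [simp]: "sg_edge p i j 0 = p i"
  by (simp add: sg_edge_def)

lemma sg_edge_1 [simp]: "sg_edge p i j 1 = p j"
  by (simp add: sg_edge_def)

lemma sg_edge_reverse: "sg_edge p j i t = sg_edge p i j (1 - t)"
  unfolding sg_edge_def of_real_diff of_real_1 by algebra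

lemma sg_map_sg_edge_start: "sg_map p i (sg_edge p i j t) = sg_edge p i j (t / 2)"
  unfolding sg_edge_def sg_map_def of_real_divide by (simp add: field_simps)

lemma sg_map_sg_edge_end: "sg_map p j (sg_edge p i j t) = sg_edge p i j ((t + 1) / 2)"
  unfolding sg_edge_def sg_map_def of_real_divide of_real_add by (simp add: field_simps)

lemma sg_word_replicate_sg_edge:
  "sg_word p (replicate m i) (sg_edge p i j t) = sg_edge p i j (t / 2 ^ m)"
  by (induction m arbitrary: t) (simp_all add: sg_word_replicate_Suc sg_map_sg_edge_start mult.commute)

lemma sg_edge_in_vertex_cell:
  assumes "0 \<le> t" "t \<le> (1/2) ^ m"
  shows "\<exists>u\<in>{0..1}. sg_edge p i j t = sg_word p (replicate m i) (sg_edge p i j u)"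
  using assms by (intro bexI [of _ "2 ^ m * t"]) (auto simp: sg_word_replicate_sg_edge field_simps)

lemma sg_edge_in_far_cell:
  assumes "(1/2) ^ Suc m \<le> t" "t \<le> (1/2) ^ m"
  shows "\<exists>u\<in>{0..1}. sg_edge p i j t = sg_word p (replicate m i @ [j]) (sg_edge p i j u)"
  using assms
  by (intro bexI [of _ "2 ^ Suc m * t - 1"])
     (auto simp: sg_word_append sg_map_sg_edge_end sg_word_replicate_sg_edge field_simps)

lemma sg_edge_self_similar:
  "sg_edge p i j ` {0..1} \<subseteq> (\<Union>l\<in>{i,j}. sg_map p l ` sg_edge p i j ` {0..1})"
proof
  fix x assume "x \<in> sg_edge p i j ` {0..1}"
  then obtain t where t: "t \<in> {0..1}" "x = sg_edge p i j t" by blast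
  show "x \<in> (\<Union>l\<in>{i,j}. sg_map p l ` sg_edge p i j ` {0..1})"
  proof (cases "t \<le> 1/2")
    case True
    then have "x = sg_map p i (sg_edge p i j (2 * t))" "2 * t \<in> {0..1}"
      using t by (simp_all add: sg_map_sg_edge_start)
    then show ?thesis by blast
  next
    case False
    then have "x = sg_map p j (sg_edge p i j (2 * t - 1))" "2 * t - 1 \<in> {0..1}"
      using t by (simp_all add: sg_map_sg_edge_end)
    then show ?thesis by blast
  qed
qed

lemma sg_vertex_in_attractor:
  assumes "sg_attractor p K" "i \<in> {0,1,2}"
  shows "p i \<in> K"
proof -
  obtain x where "x \<in> K"
    using assms(1) by (auto simp: sg_attractor_def)
  have "{p i} \<subseteq> K"
    using assms(2) by (intro self_similar_subset_attractor [OF assms(1) \<open>x \<in> K\<close>, of "{i}"]) auto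
  then show ?thesis
    by simp
qed

lemma sg_edge_in_attractor:
  assumes "sg_attractor p K" "i \<in> {0,1,2}" "j \<in> {0,1,2}" "t \<in> {0..1}"
  shows "sg_edge p i j t \<in> K"
proof -
  have "bounded (sg_edge p i j ` {0..1})"
    unfolding sg_edge_def by (intro compact_imp_bounded compact_continuous_image continuous_intros) auto
  then have "sg_edge p i j ` {0..1} \<subseteq> K"
    using self_similar_subset_attractor [OF assms(1) sg_vertex_in_attractor [OF assms(1,2)] _
        sg_edge_self_similar] assms(2,3)
    by auto
  with assms(4) show ?thesis
    by auto
qed

lemma third_vertex:
  assumes "i \<in> {0,1,2::nat}" "j \<in> {0,1,2}" "i \<noteq> j"
  obtains k where "{i,j,k} = {0,1,2}"
proof -
  have "{i, j, 3 - i - j} = {0,1,2}"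
    using assms by auto
  then show ?thesis
    by (rule that)
qed

definition dyadic_level :: "real \<Rightarrow> nat" where
  "dyadic_level t = (LEAST m. (1/2) ^ Suc m < t)"

lemma dyadic_level_bounds:
  assumes "0 < t" "t \<le> 1"
  shows "(1/2) ^ Suc (dyadic_level t) < t" "t \<le> (1/2) ^ dyadic_level t"
proof -
  obtain n where "(1/2::real) ^ n < t"
    using real_arch_pow_inv [OF assms(1), of "1/2"] by auto
  moreover have "(1/2::real) ^ Suc n \<le> (1/2) ^ n"
    by (rule power_decreasing) simp_all
  ultimately have "(1/2::real) ^ Suc n < t"
    by linarith
  then show "(1/2) ^ Suc (dyadic_level t) < t"
    unfolding dyadic_level_def by (rule LeastI)
  show "t \<le> (1/2) ^ dyadic_level t"
  proof (cases "dyadic_level t")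
    case (Suc m)
    then have "\<not> (1/2::real) ^ Suc m < t"
      using not_less_Least [of m "\<lambda>m. (1/2::real) ^ Suc m < t"] by (simp add: dyadic_level_def)
    then show ?thesis
      using Suc by simp
  qed (use assms(2) in simp)
qed

lemma filterlim_dyadic_level: "filterlim dyadic_level sequentially (at_right 0)"
  unfolding filterlim_at_top eventually_at_right_field
proof (intro allI exI conjI impI)
  fix N :: nat and t :: real
  assume t: "0 < t" "t < (1/2) ^ N"
  moreover have "(1/2::real) ^ N \<le> 1"
    by (rule power_le_one) simp_all
  ultimately have less: "(1/2::real) ^ Suc (dyadic_level t) < (1/2) ^ N"
    using dyadic_level_bounds(1) [of t] by simp
  show "N \<le> dyadic_level t"
  proof (rule ccontr)
    assume "\<not> N \<le> dyadic_level t"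
    then have "(1/2::real) ^ N \<le> (1/2) ^ Suc (dyadic_level t)"
      by (intro power_decreasing) simp_all
    with less show False
      by linarith
  qed
qed simp

lemma has_real_derivative_0_at_0_iff:
  fixes g :: "real \<Rightarrow> real"
  shows "(g has_real_derivative 0) (at 0 within {0..1}) \<longleftrightarrow>
    ((\<lambda>t. (g t - g 0) / t) \<longlongrightarrow> 0) (at_right 0)"
  by (simp add: has_field_derivative_iff at_within_Icc_at_right)

lemma filterlim_slope_at_left_1_iff:
  fixes g :: "real \<Rightarrow> real"
  shows "filterlim (\<lambda>t. (g t - g 1) / (t - 1)) F (at_left 1) \<longleftrightarrow>
    filterlim (\<lambda>t. - ((g (1 - t) - g 1) / t)) F (at_right 0)"
  unfolding filterlim_at_left_to_right filterlim_at_right_to_0 [of _ _ "-1"] by simp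

lemma has_real_derivative_0_at_1_iff:
  fixes g :: "real \<Rightarrow> real"
  shows "(g has_real_derivative 0) (at 1 within {0..1}) \<longleftrightarrow>
    ((\<lambda>t. (g (1 - t) - g 1) / t) \<longlongrightarrow> 0) (at_right 0)"
  using filterlim_slope_at_left_1_iff [of g "nhds 0"]
    tendsto_minus_cancel_left [of "\<lambda>t. (g (1 - t) - g 1) / t" 0 "at_right 0"]
  by (simp add: has_field_derivative_iff at_within_Icc_at_left)

lemma sg_harmonic_uminus: "sg_harmonic p K f \<Longrightarrow> sg_harmonic p K (\<lambda>x. - f x)"
  unfolding sg_harmonic_def by (auto intro: continuous_intros)

lemma vertex_triple_mem:
  "{i,j,k} = {0,1,2::nat} \<Longrightarrow> i \<in> {0,1,2} \<and> j \<in> {0,1,2} \<and> k \<in> {0,1,2}"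
  by blast

locale sg_harmonic_function =
  fixes p :: "nat \<Rightarrow> complex" and K :: "complex set" and f :: "complex \<Rightarrow> real"
  assumes attractor: "sg_attractor p K" and harmonic: "sg_harmonic p K f"
begin

lemma midpoint_rule:
  assumes "{i,j,k} = {0,1,2}" "w \<in> lists {0,1,2}"
  shows "f (sg_word p w (sg_map p j (p i))) =
    (2 * f (sg_word p w (p i)) + 2 * f (sg_word p w (p j)) + f (sg_word p w (p k))) / 5"
proof -
  have "f (sg_word p w (sg_map p j (p i))) = f ((sg_word p w (p i) + sg_word p w (p j)) / 2)"
    by (simp add: sg_map_def sg_word_midpoint)
  also have "\<dots> = (2 * f (sg_word p w (p i)) + 2 * f (sg_word p w (p j)) + f (sg_word p w (p k))) / 5"
    using harmonic assms unfolding sg_harmonic_def in_lists_conv_set by blast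
  finally show ?thesis .
qed

lemma subcell_vertex_step:
  assumes "w \<in> lists {0,1,2}" "\<And>k. k \<in> {0,1,2} \<Longrightarrow> f (sg_word p w (p k)) \<in> {lo..hi}"
    and "i \<in> {0,1,2}" "j \<in> {0,1,2}"
  shows "f (sg_word p w (sg_map p j (p i))) \<in> {lo..hi}"
proof (cases "i = j")
  case True
  then show ?thesis using assms(2,3) by simp
next
  case False
  with assms(3,4) obtain k where ijk: "{i,j,k} = {0,1,2}"
    by (rule third_vertex)
  then have vertex: "f (sg_word p w (p l)) \<in> {lo..hi}" if "l \<in> {i,j,k}" for l
    using that assms(2) by blast
  show ?thesis
    unfolding midpoint_rule [OF ijk assms(1)] using vertex [of i] vertex [of j] vertex [of k] by auto
qed

lemma subcell_vertex_bounds: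
  assumes "w \<in> lists {0,1,2}" "\<And>k. k \<in> {0,1,2} \<Longrightarrow> f (sg_word p w (p k)) \<in> {lo..hi}"
    and "v \<in> lists {0,1,2}" "i \<in> {0,1,2}"
  shows "f (sg_word p (w @ v) (p i)) \<in> {lo..hi}"
  using assms
proof (induction v arbitrary: w)
  case Nil
  then show ?case by simp
next
  case (Cons j v)
  have "w @ [j] \<in> lists {0,1,2}"
    using Cons.prems by auto
  moreover have "f (sg_word p (w @ [j]) (p l)) \<in> {lo..hi}" if "l \<in> {0,1,2}" for l
    using subcell_vertex_step [OF Cons.prems(1,2) that] Cons.prems(3) by (simp add: sg_word_append)
  ultimately show ?case
    using Cons.IH [of "w @ [j]"] Cons.prems(3,4) by simp
qed

text \<open>Maximum principle on a cell: the vertices of its subcells obey the bound, each midpoint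
  value being a convex combination of vertex values, and they are dense in the cell.\<close>

lemma cell_bounds:
  assumes "w \<in> lists {0,1,2}" "\<And>k. k \<in> {0,1,2} \<Longrightarrow> f (sg_word p w (p k)) \<in> {lo..hi}"
    and "x \<in> K"
  shows "f (sg_word p w x) \<in> {lo..hi}"
proof -
  define S where "S = K \<inter> (f \<circ> sg_word p w) -` {lo..hi}"
  have "continuous_on K (f \<circ> sg_word p w)"
    using harmonic continuous_on_sg_word sg_word_in_attractor [OF attractor assms(1)]
    by (intro continuous_on_compose) (auto simp: sg_harmonic_def elim!: continuous_on_subset)
  then have "closed S"
    unfolding S_def using attractor
    by (intro continuous_closed_preimage) (simp_all add: sg_attractor_compact compact_imp_closed)
  moreover have "(\<lambda>v. sg_word p v (p 0)) ` lists {0,1,2} \<subseteq> S"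
  proof (rule image_subsetI)
    fix v :: "nat list" assume v: "v \<in> lists {0,1,2}"
    have "sg_word p v (p 0) \<in> K"
      using sg_word_in_attractor [OF attractor v sg_vertex_in_attractor [OF attractor]] by simp
    moreover have "f (sg_word p w (sg_word p v (p 0))) \<in> {lo..hi}"
      using subcell_vertex_bounds [OF assms(1,2) v, of 0] by (simp add: sg_word_append)
    ultimately show "sg_word p v (p 0) \<in> S"
      by (simp add: S_def)
  qed
  ultimately have "closure ((\<lambda>v. sg_word p v (p 0)) ` lists {0,1,2}) \<subseteq> S"
    by (rule closure_minimal [rotated])
  moreover have "K \<subseteq> closure ((\<lambda>v. sg_word p v (p 0)) ` lists {0,1,2})"
    using attractor
    by (intro self_similar_subset_closure_orbit sg_attractor_subset_images compact_imp_bounded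
        sg_attractor_compact)
  ultimately show ?thesis
    using assms(3) by (auto simp: S_def)
qed

lemma vertex_cell_step:
  assumes ijk: "{i,j,k} = {0,1,2}"
  shows "f (sg_word p (replicate (Suc m) i) (p j)) =
      (2 * f (sg_word p (replicate m i) (p j)) + 2 * f (p i) + f (sg_word p (replicate m i) (p k))) / 5"
    and "f (sg_word p (replicate (Suc m) i) (p k)) =
      (2 * f (sg_word p (replicate m i) (p k)) + 2 * f (p i) + f (sg_word p (replicate m i) (p j))) / 5"
proof -
  have w: "replicate m i \<in> lists {0,1,2}"
    using vertex_triple_mem [OF ijk] by (auto simp: in_lists_conv_set)
  have jik: "{j,i,k} = {0,1,2}" and kij: "{k,i,j} = {0,1,2}"
    using ijk by (simp_all only: insert_commute)
  show "f (sg_word p (replicate (Suc m) i) (p j)) =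
      (2 * f (sg_word p (replicate m i) (p j)) + 2 * f (p i) + f (sg_word p (replicate m i) (p k))) / 5"
    and "f (sg_word p (replicate (Suc m) i) (p k)) =
      (2 * f (sg_word p (replicate m i) (p k)) + 2 * f (p i) + f (sg_word p (replicate m i) (p j))) / 5"
    unfolding sg_word_replicate_Suc comp_apply midpoint_rule [OF jik w] midpoint_rule [OF kij w]
      sg_word_replicate_vertex
    by (rule refl)+
qed

lemma vertex_cell_sum:
  assumes ijk: "{i,j,k} = {0,1,2}"
  shows "f (sg_word p (replicate m i) (p j)) + f (sg_word p (replicate m i) (p k)) - 2 * f (p i) =
    (3/5) ^ m * (f (p j) + f (p k) - 2 * f (p i))"
proof (induction m)
  case (Suc m)
  have "f (sg_word p (replicate (Suc m) i) (p j)) + f (sg_word p (replicate (Suc m) i) (p k)) - 2 * f (p i) =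
      3/5 * (f (sg_word p (replicate m i) (p j)) + f (sg_word p (replicate m i) (p k)) - 2 * f (p i))"
    unfolding vertex_cell_step [OF ijk] by (simp add: field_simps)
  also have "\<dots> = (3/5) ^ Suc m * (f (p j) + f (p k) - 2 * f (p i))"
    unfolding Suc.IH by simp
  finally show ?case .
qed simp

lemma vertex_cell_diff:
  assumes ijk: "{i,j,k} = {0,1,2}"
  shows "f (sg_word p (replicate m i) (p j)) - f (sg_word p (replicate m i) (p k)) =
    (1/5) ^ m * (f (p j) - f (p k))"
proof (induction m)
  case (Suc m)
  have "f (sg_word p (replicate (Suc m) i) (p j)) - f (sg_word p (replicate (Suc m) i) (p k)) =
      1/5 * (f (sg_word p (replicate m i) (p j)) - f (sg_word p (replicate m i) (p k)))"
    unfolding vertex_cell_step [OF ijk] by (simp add: field_simps)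
  also have "\<dots> = (1/5) ^ Suc m * (f (p j) - f (p k))"
    unfolding Suc.IH by simp
  finally show ?case .
qed simp

lemma edge_near_vertex_bound:
  assumes ijk: "{i,j,k} = {0,1,2}" and balanced: "f (p j) + f (p k) = 2 * f (p i)"
    and "0 \<le> t" "t \<le> (1/2) ^ m"
  shows "\<bar>f (sg_edge p i j t) - f (p i)\<bar> \<le> (1/5) ^ m * \<bar>f (p j) - f (p k)\<bar> / 2"
proof -
  define x where "x = (1/5) ^ m * (f (p j) - f (p k)) / 2"
  have w: "replicate m i \<in> lists {0,1,2}"
    using vertex_triple_mem [OF ijk] by (auto simp: in_lists_conv_set)
  have vj: "f (sg_word p (replicate m i) (p j)) = f (p i) + x"
    and vk: "f (sg_word p (replicate m i) (p k)) = f (p i) - x"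
    using vertex_cell_sum [OF ijk, of m] vertex_cell_diff [OF ijk, of m] balanced
    by (simp_all add: x_def)
  have vertex: "f (sg_word p (replicate m i) (p l)) \<in> {f (p i) - \<bar>x\<bar>..f (p i) + \<bar>x\<bar>}"
    if "l \<in> {0,1,2}" for l
  proof -
    from that [folded ijk] consider "l = i" | "l = j" | "l = k"
      by blast
    then show ?thesis
      using vj vk abs_ge_self [of x] abs_ge_minus_self [of x] by cases simp_all
  qed
  obtain u where "u \<in> {0..1}" and t: "sg_edge p i j t = sg_word p (replicate m i) (sg_edge p i j u)"
    using sg_edge_in_vertex_cell [OF assms(3,4)] by blast
  then have "sg_edge p i j u \<in> K"
    using vertex_triple_mem [OF ijk] by (intro sg_edge_in_attractor [OF attractor]) auto
  from cell_bounds [OF w vertex this]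
  have "f (sg_edge p i j t) \<in> {f (p i) - \<bar>x\<bar>..f (p i) + \<bar>x\<bar>}"
    unfolding t .
  moreover have "\<bar>x\<bar> = (1/5) ^ m * \<bar>f (p j) - f (p k)\<bar> / 2"
    by (simp add: x_def abs_mult)
  ultimately show ?thesis
    unfolding atLeastAtMost_iff abs_le_iff by auto
qed

lemma edge_far_cell_lower_bound:
  assumes ijk: "{i,j,k} = {0,1,2}"
    and dominant:
      "2 * (1/5) ^ m * \<bar>f (p j) - f (p k)\<bar> \<le> (3/5) ^ m * (f (p j) + f (p k) - 2 * f (p i))"
    and "(1/2) ^ Suc m \<le> t" "t \<le> (1/2) ^ m"
  shows "f (p i) + (3/5) ^ m * (f (p j) + f (p k) - 2 * f (p i)) / 10 \<le> f (sg_edge p i j t)"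
proof -
  define w where "w = replicate m i"
  define r where "r = (3/5) ^ m * (f (p j) + f (p k) - 2 * f (p i))"
  define y where "y = (1/5) ^ m * (f (p j) - f (p k))"
  define a where "a = f (sg_word p w (p j)) - f (p i)"
  define c where "c = f (sg_word p w (p k)) - f (p i)"
  have "a + c = r" "a - c = y"
    using vertex_cell_sum [OF ijk, of m] vertex_cell_diff [OF ijk, of m]
    by (simp_all add: a_def c_def r_def y_def w_def)
  moreover have "2 * \<bar>y\<bar> \<le> r"
    using dominant by (simp add: r_def y_def abs_mult)
  ultimately have ac: "0 \<le> r" "r / 4 \<le> a" "r / 4 \<le> c"
    using abs_ge_self [of y] abs_ge_minus_self [of y] by linarith+
  have w: "w \<in> lists {0,1,2}" "w @ [j] \<in> lists {0,1,2}"
    using vertex_triple_mem [OF ijk] by (auto simp: w_def in_lists_conv_set)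
  have kji: "{k,j,i} = {0,1,2}"
    using ijk by (simp only: insert_commute)
  have "f (sg_word p w (sg_map p j (p l))) \<in> {f (p i) + r / 10..f (p i) + a + c}"
    if "l \<in> {i,j,k}" for l
  proof -
    from that consider "l = i" | "l = j" | "l = k"
      by blast
    then show ?thesis
      using midpoint_rule [OF ijk w(1)] midpoint_rule [OF kji w(1)] ac
      by cases (auto simp: a_def c_def w_def)
  qed
  then have vertex: "f (sg_word p (w @ [j]) (p l)) \<in> {f (p i) + r / 10..f (p i) + a + c}"
    if "l \<in> {0,1,2}" for l
    using that [folded ijk] by (simp add: sg_word_append)
  obtain u where "u \<in> {0..1}" and t: "sg_edge p i j t = sg_word p (w @ [j]) (sg_edge p i j u)"
    using sg_edge_in_far_cell [OF assms(3,4), of p i j] unfolding w_def by blast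
  then have "sg_edge p i j u \<in> K"
    using vertex_triple_mem [OF ijk] by (intro sg_edge_in_attractor [OF attractor]) auto
  from cell_bounds [OF w(2) vertex this]
  have "f (sg_edge p i j t) \<in> {f (p i) + r / 10..f (p i) + a + c}"
    unfolding t .
  then show ?thesis
    by (simp add: r_def)
qed

lemma edge_slope_tendsto_zero:
  assumes ijk: "{i,j,k} = {0,1,2}" and balanced: "f (p j) + f (p k) = 2 * f (p i)"
  shows "((\<lambda>t. (f (sg_edge p i j t) - f (p i)) / t) \<longlongrightarrow> 0) (at_right 0)"
proof (rule Lim_null_comparison)
  define D where "D = \<bar>f (p j) - f (p k)\<bar>"
  show "((\<lambda>t. D * (2/5) ^ dyadic_level t) \<longlongrightarrow> 0) (at_right 0)"
    by (rule filterlim_compose [OF _ filterlim_dyadic_level])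
      (intro tendsto_mult_right_zero LIMSEQ_power_zero, simp)
  show "\<forall>\<^sub>F t in at_right 0.
      norm ((f (sg_edge p i j t) - f (p i)) / t) \<le> D * (2/5) ^ dyadic_level t"
    unfolding eventually_at_right_field
  proof (intro exI conjI allI impI)
    fix t :: real assume t: "0 < t" "t < 1"
    define m where "m = dyadic_level t"
    have m: "(1/2) ^ Suc m < t" "t \<le> (1/2) ^ m"
      using dyadic_level_bounds [of t] t by (simp_all add: m_def)
    have "norm ((f (sg_edge p i j t) - f (p i)) / t) = \<bar>f (sg_edge p i j t) - f (p i)\<bar> / t"
      using t by simp
    also have "\<dots> \<le> ((1/5) ^ m * D / 2) / (1/2) ^ Suc m"
      using edge_near_vertex_bound [OF ijk balanced _ m(2)] t m(1)
      by (intro frac_le) (simp_all add: D_def)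
    also have "\<dots> = D * (2/5) ^ m"
      by (simp add: power_divide field_simps)
    finally show "norm ((f (sg_edge p i j t) - f (p i)) / t) \<le> D * (2/5) ^ dyadic_level t"
      by (simp add: m_def)
  qed simp
qed

lemma edge_slope_at_top:
  assumes ijk: "{i,j,k} = {0,1,2}" and convex: "2 * f (p i) < f (p j) + f (p k)"
  shows "filterlim (\<lambda>t. (f (sg_edge p i j t) - f (p i)) / t) at_top (at_right 0)"
proof (rule filterlim_at_top_mono)
  define s where "s = f (p j) + f (p k) - 2 * f (p i)"
  define D where "D = \<bar>f (p j) - f (p k)\<bar>"
  have "s > 0"
    using convex by (simp add: s_def)
  have "filterlim (\<lambda>m. s / 10 * (6/5) ^ m) at_top sequentially"
    using \<open>s > 0\<close>
    by (intro filterlim_tendsto_pos_mult_at_top [OF tendsto_const]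
        filterlim_at_infinity_imp_filterlim_at_top [OF filterlim_realpow_sequentially_gt1]) simp_all
  then show "filterlim (\<lambda>t. s / 10 * (6/5) ^ dyadic_level t) at_top (at_right 0)"
    by (rule filterlim_compose [OF _ filterlim_dyadic_level])
  have "((\<lambda>m. 2 * D * (1/3) ^ m) \<longlongrightarrow> 0) sequentially"
    by (intro tendsto_mult_right_zero LIMSEQ_power_zero) simp
  then have "\<forall>\<^sub>F m in sequentially. 2 * D * (1/3) ^ m < s"
    using \<open>s > 0\<close> by (rule order_tendstoD)
  then have "\<forall>\<^sub>F m in sequentially. 2 * (1/5) ^ m * D \<le> (3/5) ^ m * s"
  proof (rule eventually_mono)
    fix m :: nat assume "2 * D * (1/3) ^ m < s"
    then have "2 * D * (1/3) ^ m * (3/5) ^ m \<le> s * (3/5) ^ m"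
      by (intro mult_right_mono) simp_all
    moreover have "(1/3::real) ^ m * (3/5) ^ m = (1/5) ^ m"
      by (simp flip: power_mult_distrib)
    ultimately show "2 * (1/5) ^ m * D \<le> (3/5) ^ m * s"
      by (metis mult.assoc mult.commute)
  qed
  then have "\<forall>\<^sub>F t in at_right 0. 2 * (1/5) ^ dyadic_level t * D \<le> (3/5) ^ dyadic_level t * s"
    by (rule eventually_compose_filterlim [OF _ filterlim_dyadic_level])
  moreover have "\<forall>\<^sub>F t in at_right 0. 0 < t \<and> t < (1::real)"
    unfolding eventually_at_right_field by (intro exI [of _ 1]) simp
  ultimately show "\<forall>\<^sub>F t in at_right 0.
      s / 10 * (6/5) ^ dyadic_level t \<le> (f (sg_edge p i j t) - f (p i)) / t"
  proof eventually_elim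
    case (elim t)
    define m where "m = dyadic_level t"
    have m: "(1/2) ^ Suc m < t" "t \<le> (1/2) ^ m"
      using dyadic_level_bounds [of t] elim(2) by (simp_all add: m_def)
    have lower: "(3/5) ^ m * s / 10 \<le> f (sg_edge p i j t) - f (p i)"
      using edge_far_cell_lower_bound [OF ijk _ less_imp_le [OF m(1)] m(2)] elim(1)
      by (simp add: s_def D_def m_def)
    have "(6/5::real) ^ m = (3/5) ^ m * 2 ^ m"
      by (simp flip: power_mult_distrib)
    then have "s / 10 * (6/5) ^ m = ((3/5) ^ m * s / 10) / (1/2) ^ m"
      by (simp add: power_one_over)
    also have "\<dots> \<le> ((3/5) ^ m * s / 10) / t"
      using \<open>s > 0\<close> elim(2) m(2) by (intro divide_left_mono) simp_all
    also have "\<dots> \<le> (f (sg_edge p i j t) - f (p i)) / t"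
      using lower elim(2) by (intro divide_right_mono) simp_all
    finally show ?case
      by (simp add: m_def)
  qed
qed

lemma edge_slope_infinite:
  assumes ijk: "{i,j,k} = {0,1,2}" and unbalanced: "f (p j) + f (p k) \<noteq> 2 * f (p i)"
  shows "filterlim (\<lambda>t. (f (sg_edge p i j t) - f (p i)) / t) at_top (at_right 0) \<or>
    filterlim (\<lambda>t. (f (sg_edge p i j t) - f (p i)) / t) at_bot (at_right 0)"
proof (cases "2 * f (p i) < f (p j) + f (p k)")
  case True
  then show ?thesis
    using edge_slope_at_top [OF ijk] by blast
next
  case False
  interpret neg: sg_harmonic_function p K "\<lambda>x. - f x"
    using attractor sg_harmonic_uminus [OF harmonic] by unfold_locales
  have "filterlim (\<lambda>t. (- f (sg_edge p i j t) - - f (p i)) / t) at_top (at_right 0)"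
    using False unbalanced by (intro neg.edge_slope_at_top [OF ijk]) simp
  then have "filterlim (\<lambda>t. - ((f (sg_edge p i j t) - f (p i)) / t)) at_top (at_right 0)"
    by (simp add: minus_divide_left)
  then show ?thesis
    by (simp add: filterlim_uminus_at_bot)
qed

lemma edge_slope_at_vertex:
  assumes "{i,j,k} = {0,1,2}"
  shows "(f (p j) + f (p k) = 2 * f (p i) \<longrightarrow>
      ((\<lambda>t. (f (sg_edge p i j t) - f (p i)) / t) \<longlongrightarrow> 0) (at_right 0)) \<and>
    (f (p j) + f (p k) \<noteq> 2 * f (p i) \<longrightarrow>
      filterlim (\<lambda>t. (f (sg_edge p i j t) - f (p i)) / t) at_top (at_right 0) \<or>
      filterlim (\<lambda>t. (f (sg_edge p i j t) - f (p i)) / t) at_bot (at_right 0))"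
  using edge_slope_tendsto_zero [OF assms] edge_slope_infinite [OF assms] by blast

end

theorem lemma5:
  fixes p :: "nat \<Rightarrow> complex" and K :: "complex set" and f :: "complex \<Rightarrow> real"
    and \<alpha> \<beta> \<gamma> :: real and g :: "real \<Rightarrow> real"
  assumes "unit_equilateral p"
    and "sg_attractor p K"
    and "sg_harmonic p K f"
    and "f (p 0) = \<alpha>" and "f (p 1) = \<beta>" and "f (p 2) = \<gamma>"
    and "\<And>t. g t = f (p 1 + of_real t * (p 2 - p 1))"
  shows "(2 * \<beta> = \<alpha> + \<gamma> \<longrightarrow> (g has_real_derivative 0) (at 0 within {0..1})) \<and>
         (2 * \<beta> \<noteq> \<alpha> + \<gamma> \<longrightarrow>
            (filterlim (\<lambda>t. (g t - g 0) / t) at_top (at_right 0) \<or>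
             filterlim (\<lambda>t. (g t - g 0) / t) at_bot (at_right 0))) \<and>
         (2 * \<gamma> = \<alpha> + \<beta> \<longrightarrow> (g has_real_derivative 0) (at 1 within {0..1})) \<and>
         (2 * \<gamma> \<noteq> \<alpha> + \<beta> \<longrightarrow>
            (filterlim (\<lambda>t. (g t - g 1) / (t - 1)) at_top (at_left 1) \<or>
             filterlim (\<lambda>t. (g t - g 1) / (t - 1)) at_bot (at_left 1)))"
proof -
  interpret sg_harmonic_function p K f
    using assms(2,3) by unfold_locales
  have g_edge: "g t = f (sg_edge p 1 2 t)" for t
    using assms(7) by (simp add: sg_edge_def)
  have g_reverse: "g (1 - t) = f (sg_edge p 2 1 t)" for t
    unfolding g_edge sg_edge_reverse [of p 2 1] ..
  have slope_0: "(\<lambda>t. (g t - g 0) / t) = (\<lambda>t. (f (sg_edge p 1 2 t) - f (p 1)) / t)"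
    by (simp add: g_edge)
  have slope_1: "(\<lambda>t. (g (1 - t) - g 1) / t) = (\<lambda>t. (f (sg_edge p 2 1 t) - f (p 2)) / t)"
    using g_reverse [of 0] by (simp add: g_reverse)
  have "{1,2,0} = {0,1,2::nat}" "{2,1,0} = {0,1,2::nat}"
    by auto
  from this [THEN edge_slope_at_vertex] assms(4-6) show ?thesis
    unfolding has_real_derivative_0_at_0_iff has_real_derivative_0_at_1_iff filterlim_slope_at_left_1_iff
      filterlim_uminus_at_top [symmetric] filterlim_uminus_at_bot [symmetric] slope_0 slope_1
    by auto
qed

end
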